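(* Let $v,u$ be integrable functions on $[0,\infty)$ and let $z_1,z_2,\gamma_1,\gamma_2$ be integrable functions on $[0,\infty)$ such that $$z_1(x)\le v(x)\le z_2(x)\quad\text{and}\quad \gamma_1(x)\le u(x)\le\gamma_2(x)\quad\text{for all }x\in[0,\infty).$$ Then for all $x>0$, $\alpha>0$, $\rho>0$ and $\beta,\eta,k\in\mathbb{R}$, writing $\mathcal{J}=\,{}^{\rho}\mathcal{J}^{\alpha,\beta}_{\eta,k}$ and $\Lambda=\Lambda^{\rho,\beta}_{x,k}(\alpha,\eta)$, $$\Big[\Lambda\,\mathcal{J}(vu)(x)-\mathcal{J}v(x)\,\mathcal{J}u(x)\Big]^2\le T(v,z_1,z_2)\,T(u,\gamma_1,\gamma_2),$$ where for functions $\varphi,\psi,\omega$, $$\begin{aligned}T(\varphi,\psi,\omega)={}&(\mathcal{J}\omega(x)-\mathcal{J}\varphi(x))(\mathcal{J}\varphi(x)-\mathcal{J}\psi(x)) +\Lambda\,\mathcal{J}(\varphi\psi)(x)-\mathcal{J}\varphi(x)\,\mathcal{J}\psi(x)\\ &+\Lambda\,\mathcal{J}(\varphi\omega)(x)-\mathcal{J}\varphi(x)\,\mathcal{J}\omega(x) -\Lambda\,\mathcal{J}(\psi\omega)(x)+\mathcal{J}\psi(x)\,\mathcal{J}\omega(x).\end{aligned}$$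
   Context: For a function $f$ on $[0,\infty)$, $x>0$, $\alpha>0$, $\rho>0$ and $\beta,\eta,k\in\mathbb{R}$, the generalized Katugampola fractional integral is $${}^{\rho}\mathcal{J}^{\alpha,\beta}_{\eta,k}f(x)=\frac{\rho^{1-\beta}x^{k}}{\Gamma(\alpha)}\int_0^x\frac{\tau^{\rho(\eta+1)-1}}{(x^\rho-\tau^\rho)^{1-\alpha}}f(\tau)\,d\tau,$$ defined whenever the integral exists; all such integrals appearing are assumed to exist. $\mathcal{J}(fg)(x)$ denotes the operator applied to the pointwise product $fg$. Also $$\Lambda^{\rho,\beta}_{x,k}(\alpha,\eta)=\frac{\Gamma(\eta+1)}{\Gamma(\eta+\alpha+1)}\rho^{-\beta}x^{k+\rho(\eta+\alpha)}.$$ *)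

theory Defs
  imports "HOL-Analysis.Analysis"
begin

definition kat_kernel :: "real \<Rightarrow> real \<Rightarrow> real \<Rightarrow> real \<Rightarrow> real \<Rightarrow> real" where
  "kat_kernel rho alpha eta x tau =
     tau powr (rho * (eta + 1) - 1) / (x powr rho - tau powr rho) powr (1 - alpha)"

definition kat_exists :: "real \<Rightarrow> real \<Rightarrow> real \<Rightarrow> (real \<Rightarrow> real) \<Rightarrow> real \<Rightarrow> bool" where
  "kat_exists rho alpha eta f x =
     set_integrable lborel {0..x} (\<lambda>tau. kat_kernel rho alpha eta x tau * f tau)"

definition kat_J :: "real \<Rightarrow> real \<Rightarrow> real \<Rightarrow> real \<Rightarrow> real \<Rightarrow> (real \<Rightarrow> real) \<Rightarrow> real \<Rightarrow> real" where
  "kat_J rho alpha beta eta k f x =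
     rho powr (1 - beta) * x powr k / Gamma alpha *
     (LINT tau:{0..x}|lborel. kat_kernel rho alpha eta x tau * f tau)"

definition kat_Lambda :: "real \<Rightarrow> real \<Rightarrow> real \<Rightarrow> real \<Rightarrow> real \<Rightarrow> real \<Rightarrow> real" where
  "kat_Lambda rho alpha beta eta k x =
     Gamma (eta + 1) / Gamma (eta + alpha + 1) * rho powr (- beta) * x powr (k + rho * (eta + alpha))"

definition kat_T :: "real \<Rightarrow> real \<Rightarrow> real \<Rightarrow> real \<Rightarrow> real \<Rightarrow> real \<Rightarrow>
    (real \<Rightarrow> real) \<Rightarrow> (real \<Rightarrow> real) \<Rightarrow> (real \<Rightarrow> real) \<Rightarrow> real" where
  "kat_T rho alpha beta eta k x \<phi> \<psi> \<omega> =
     (let J = (\<lambda>f. kat_J rho alpha beta eta k f x); L = kat_Lambda rho alpha beta eta k x in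
      (J \<omega> - J \<phi>) * (J \<phi> - J \<psi>)
      + L * J (\<lambda>t. \<phi> t * \<psi> t) - J \<phi> * J \<psi>
      + L * J (\<lambda>t. \<phi> t * \<omega> t) - J \<phi> * J \<omega>
      - L * J (\<lambda>t. \<psi> t * \<omega> t) + J \<psi> * J \<omega>)"

end

theory Submission
  imports Defs
begin

(* Up to the positive factor c = rho^(1-beta) x^k / Gamma(alpha), the operator J is integration
   against the nonnegative weight w given by the kernel on [0,x]. The substitution s = (tau/x)^rho
   turns the integral of w into x^(rho(eta+alpha)) / rho * B(eta+1, alpha), so Lambda = J 1.
   For a nonnegative weight, B(f,g) = (int w)(int w f g) - (int w f)(int w g) is a positive
   semidefinite symmetric bilinear form, hence B(v,u)^2 <= B(v,v) B(u,u) by the discriminant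
   argument; and T(phi,psi,omega)/c^2 exceeds B(phi,phi) by
   (int w)(int w (omega - phi)(phi - psi)), which is nonnegative when psi <= phi <= omega. *)

lemma nonneg_quadratic_discriminant:
  fixes a b c :: real
  assumes a: "a \<ge> 0" and nonneg: "\<And>t. 0 \<le> a * t\<^sup>2 + 2 * b * t + c"
  shows "b\<^sup>2 \<le> a * c"
proof (cases "a = 0")
  case False
  then have "0 < a" using a by simp
  have "0 \<le> a * (-b/a)\<^sup>2 + 2 * b * (-b/a) + c" by (rule nonneg)
  also have "\<dots> = c - b\<^sup>2 / a" using \<open>0 < a\<close> by (simp add: field_simps power2_eq_square)
  finally show ?thesis using \<open>0 < a\<close> by (simp add: field_simps)
next
  case True
  show ?thesis
  proof (rule ccontr)
    assume "\<not> ?thesis"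
    then have "b \<noteq> 0" using True by simp
    have "0 \<le> a * (-(c+1)/(2*b))\<^sup>2 + 2 * b * (-(c+1)/(2*b)) + c" by (rule nonneg)
    also have "\<dots> = -1" using True \<open>b \<noteq> 0\<close> by (simp add: field_simps)
    finally show False by simp
  qed
qed

text \<open>\<open>weighted_cov M w f g\<close> is \<open>(\<integral>w)\<^sup>2\<close> times the covariance of \<open>f\<close> and \<open>g\<close> under the
  probability density \<open>w / \<integral>w\<close>.\<close>
definition weighted_cov :: "'a measure \<Rightarrow> ('a \<Rightarrow> real) \<Rightarrow> ('a \<Rightarrow> real) \<Rightarrow> ('a \<Rightarrow> real) \<Rightarrow> real" where
  "weighted_cov M w f g =
     (\<integral>t. w t \<partial>M) * (\<integral>t. w t * (f t * g t) \<partial>M) - (\<integral>t. w t * f t \<partial>M) * (\<integral>t. w t * g t \<partial>M)"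

lemma weighted_cov_self_nonneg:
  fixes w f :: "'a \<Rightarrow> real"
  assumes w: "\<And>t. 0 \<le> w t" and iw: "integrable M w"
    and if1: "integrable M (\<lambda>t. w t * f t)" and iff: "integrable M (\<lambda>t. w t * (f t * f t))"
  shows "0 \<le> weighted_cov M w f f"
proof -
  have "0 \<le> (\<integral>t. w t \<partial>M) * c\<^sup>2 + 2 * (- (\<integral>t. w t * f t \<partial>M)) * c + (\<integral>t. w t * (f t * f t) \<partial>M)"
    for c
  proof -
    have "0 \<le> (\<integral>t. w t * (f t - c)\<^sup>2 \<partial>M)"
      using w by (intro integral_nonneg_AE) auto
    also have "(\<lambda>t. w t * (f t - c)\<^sup>2) = (\<lambda>t. w t * (f t * f t) - 2 * c * (w t * f t) + c\<^sup>2 * w t)"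
      by (auto simp: power2_eq_square algebra_simps)
    also have "(\<integral>t. w t * (f t * f t) - 2 * c * (w t * f t) + c\<^sup>2 * w t \<partial>M)
        = (\<integral>t. w t * (f t * f t) \<partial>M) - 2 * c * (\<integral>t. w t * f t \<partial>M) + c\<^sup>2 * (\<integral>t. w t \<partial>M)"
      using iw if1 iff by simp
    finally show ?thesis by (simp add: algebra_simps)
  qed
  moreover have "0 \<le> (\<integral>t. w t \<partial>M)"
    using w by (intro integral_nonneg_AE) auto
  ultimately have "(- (\<integral>t. w t * f t \<partial>M))\<^sup>2 \<le> (\<integral>t. w t \<partial>M) * (\<integral>t. w t * (f t * f t) \<partial>M)"
    by (intro nonneg_quadratic_discriminant)
  then show ?thesis by (simp add: weighted_cov_def power2_eq_square)
qed

lemma weighted_cov_square_le: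
  fixes w f g :: "'a \<Rightarrow> real"
  assumes w: "\<And>t. 0 \<le> w t" and iw: "integrable M w"
    and if1: "integrable M (\<lambda>t. w t * f t)" and ig: "integrable M (\<lambda>t. w t * g t)"
    and iff: "integrable M (\<lambda>t. w t * (f t * f t))" and igg: "integrable M (\<lambda>t. w t * (g t * g t))"
    and ifg: "integrable M (\<lambda>t. w t * (f t * g t))"
  shows "(weighted_cov M w f g)\<^sup>2 \<le> weighted_cov M w f f * weighted_cov M w g g"
proof -
  have "0 \<le> weighted_cov M w g g * c\<^sup>2 + 2 * weighted_cov M w f g * c + weighted_cov M w f f" for c
  proof -
    have linear: "(\<lambda>t. w t * (f t + c * g t)) = (\<lambda>t. w t * f t + c * (w t * g t))"
      by (simp add: algebra_simps)
    have square: "(\<lambda>t. w t * ((f t + c * g t) * (f t + c * g t)))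
        = (\<lambda>t. w t * (f t * f t) + 2 * c * (w t * (f t * g t)) + c\<^sup>2 * (w t * (g t * g t)))"
      by (auto simp: algebra_simps power2_eq_square)
    have "0 \<le> weighted_cov M w (\<lambda>t. f t + c * g t) (\<lambda>t. f t + c * g t)"
      by (rule weighted_cov_self_nonneg[OF w iw])
        (unfold linear square, simp_all add: if1 ig iff igg ifg)
    also have "\<dots> = weighted_cov M w g g * c\<^sup>2 + 2 * weighted_cov M w f g * c + weighted_cov M w f f"
      using if1 ig iff igg ifg
      by (simp add: weighted_cov_def linear square, simp add: algebra_simps power2_eq_square)
    finally show ?thesis .
  qed
  moreover have "0 \<le> weighted_cov M w g g"
    by (rule weighted_cov_self_nonneg[OF w iw ig igg])
  ultimately show ?thesis
    using nonneg_quadratic_discriminant by (fastforce simp: mult.commute)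
qed

text \<open>When the integrals exist, \<open>gruss_bound M w \<phi> \<psi> \<omega>\<close> equals
  \<open>weighted_cov M w \<phi> \<phi> + (\<integral>w) \<integral>w (\<omega> - \<phi>) (\<phi> - \<psi>)\<close>.\<close>
definition gruss_bound ::
    "'a measure \<Rightarrow> ('a \<Rightarrow> real) \<Rightarrow> ('a \<Rightarrow> real) \<Rightarrow> ('a \<Rightarrow> real) \<Rightarrow> ('a \<Rightarrow> real) \<Rightarrow> real" where
  "gruss_bound M w \<phi> \<psi> \<omega> =
     (\<integral>t. w t \<partial>M) * ((\<integral>t. w t * (\<phi> t * \<psi> t) \<partial>M) + (\<integral>t. w t * (\<phi> t * \<omega> t) \<partial>M)
       - (\<integral>t. w t * (\<psi> t * \<omega> t) \<partial>M)) - (\<integral>t. w t * \<phi> t \<partial>M)\<^sup>2"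

lemma integrable_weighted_square_between:
  fixes w \<phi> \<psi> \<omega> :: "'a \<Rightarrow> real"
  assumes w: "\<And>t. 0 \<le> w t"
    and i\<phi>\<psi>: "integrable M (\<lambda>t. w t * (\<phi> t * \<psi> t))" and i\<phi>\<omega>: "integrable M (\<lambda>t. w t * (\<phi> t * \<omega> t))"
    and i\<psi>\<omega>: "integrable M (\<lambda>t. w t * (\<psi> t * \<omega> t))"
    and m\<phi>\<phi>: "(\<lambda>t. w t * (\<phi> t * \<phi> t)) \<in> borel_measurable M"
    and between: "\<And>t. w t \<noteq> 0 \<Longrightarrow> \<psi> t \<le> \<phi> t \<and> \<phi> t \<le> \<omega> t"
  shows "integrable M (\<lambda>t. w t * (\<phi> t * \<phi> t))"
proof (rule Bochner_Integration.integrable_bound[OF _ m\<phi>\<phi>])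
  show "integrable M (\<lambda>t. w t * (\<phi> t * \<psi> t) + w t * (\<phi> t * \<omega> t) - w t * (\<psi> t * \<omega> t))"
    using i\<phi>\<psi> i\<phi>\<omega> i\<psi>\<omega> by simp
  show "AE t in M. norm (w t * (\<phi> t * \<phi> t))
      \<le> norm (w t * (\<phi> t * \<psi> t) + w t * (\<phi> t * \<omega> t) - w t * (\<psi> t * \<omega> t))"
  proof (rule AE_I2)
    fix t
    have gap: "0 \<le> w t * ((\<omega> t - \<phi> t) * (\<phi> t - \<psi> t))"
      using w[of t] between[of t] by (cases "w t = 0") auto
    have "w t * (\<phi> t * \<psi> t) + w t * (\<phi> t * \<omega> t) - w t * (\<psi> t * \<omega> t)
        = w t * (\<phi> t * \<phi> t) + w t * ((\<omega> t - \<phi> t) * (\<phi> t - \<psi> t))"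
      by (simp add: algebra_simps)
    then show "norm (w t * (\<phi> t * \<phi> t))
        \<le> norm (w t * (\<phi> t * \<psi> t) + w t * (\<phi> t * \<omega> t) - w t * (\<psi> t * \<omega> t))"
      using gap w[of t] by simp
  qed
qed

lemma weighted_cov_self_le_gruss_bound:
  fixes w \<phi> \<psi> \<omega> :: "'a \<Rightarrow> real"
  assumes w: "\<And>t. 0 \<le> w t"
    and i\<phi>\<psi>: "integrable M (\<lambda>t. w t * (\<phi> t * \<psi> t))" and i\<phi>\<omega>: "integrable M (\<lambda>t. w t * (\<phi> t * \<omega> t))"
    and i\<psi>\<omega>: "integrable M (\<lambda>t. w t * (\<psi> t * \<omega> t))"
    and i\<phi>\<phi>: "integrable M (\<lambda>t. w t * (\<phi> t * \<phi> t))"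
    and between: "\<And>t. w t \<noteq> 0 \<Longrightarrow> \<psi> t \<le> \<phi> t \<and> \<phi> t \<le> \<omega> t"
  shows "weighted_cov M w \<phi> \<phi> \<le> gruss_bound M w \<phi> \<psi> \<omega>"
proof -
  let ?R = "\<lambda>t. w t * ((\<omega> t - \<phi> t) * (\<phi> t - \<psi> t))"
  have iR: "integrable M ?R"
    using i\<phi>\<psi> i\<phi>\<omega> i\<psi>\<omega> i\<phi>\<phi> by (simp add: algebra_simps)
  have "(\<integral>t. w t * (\<phi> t * \<psi> t) \<partial>M) + (\<integral>t. w t * (\<phi> t * \<omega> t) \<partial>M) - (\<integral>t. w t * (\<psi> t * \<omega> t) \<partial>M)
      = (\<integral>t. w t * (\<phi> t * \<phi> t) + ?R t \<partial>M)"
    using i\<phi>\<psi> i\<phi>\<omega> i\<psi>\<omega> by (simp add: algebra_simps)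
  also have "\<dots> = (\<integral>t. w t * (\<phi> t * \<phi> t) \<partial>M) + (\<integral>t. ?R t \<partial>M)"
    using i\<phi>\<phi> iR by simp
  finally have "gruss_bound M w \<phi> \<psi> \<omega> = weighted_cov M w \<phi> \<phi> + (\<integral>t. w t \<partial>M) * (\<integral>t. ?R t \<partial>M)"
    by (simp add: gruss_bound_def weighted_cov_def algebra_simps power2_eq_square)
  moreover have "0 \<le> (\<integral>t. w t \<partial>M) * (\<integral>t. ?R t \<partial>M)"
  proof -
    have "0 \<le> ?R t" for t
      using w[of t] between[of t] by (cases "w t = 0") auto
    then show ?thesis
      by (intro mult_nonneg_nonneg integral_nonneg_AE) (simp_all add: w)
  qed
  ultimately show ?thesis by simp
qed

lemma weighted_gruss_inequality:
  fixes w v u z\<^sub>1 z\<^sub>2 g\<^sub>1 g\<^sub>2 :: "'a \<Rightarrow> real"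
  assumes w: "\<And>t. 0 \<le> w t" and iw: "integrable M w"
    and iv: "integrable M (\<lambda>t. w t * v t)" and iu: "integrable M (\<lambda>t. w t * u t)"
    and ivu: "integrable M (\<lambda>t. w t * (v t * u t))"
    and ivz\<^sub>1: "integrable M (\<lambda>t. w t * (v t * z\<^sub>1 t))" and ivz\<^sub>2: "integrable M (\<lambda>t. w t * (v t * z\<^sub>2 t))"
    and iz: "integrable M (\<lambda>t. w t * (z\<^sub>1 t * z\<^sub>2 t))"
    and iug\<^sub>1: "integrable M (\<lambda>t. w t * (u t * g\<^sub>1 t))" and iug\<^sub>2: "integrable M (\<lambda>t. w t * (u t * g\<^sub>2 t))"
    and ig: "integrable M (\<lambda>t. w t * (g\<^sub>1 t * g\<^sub>2 t))"
    and mvv: "(\<lambda>t. w t * (v t * v t)) \<in> borel_measurable M"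
    and muu: "(\<lambda>t. w t * (u t * u t)) \<in> borel_measurable M"
    and bv: "\<And>t. w t \<noteq> 0 \<Longrightarrow> z\<^sub>1 t \<le> v t \<and> v t \<le> z\<^sub>2 t"
    and bu: "\<And>t. w t \<noteq> 0 \<Longrightarrow> g\<^sub>1 t \<le> u t \<and> u t \<le> g\<^sub>2 t"
  shows "(weighted_cov M w v u)\<^sup>2 \<le> gruss_bound M w v z\<^sub>1 z\<^sub>2 * gruss_bound M w u g\<^sub>1 g\<^sub>2"
proof -
  have ivv: "integrable M (\<lambda>t. w t * (v t * v t))"
    by (rule integrable_weighted_square_between[OF w ivz\<^sub>1 ivz\<^sub>2 iz mvv bv])
  have iuu: "integrable M (\<lambda>t. w t * (u t * u t))"
    by (rule integrable_weighted_square_between[OF w iug\<^sub>1 iug\<^sub>2 ig muu bu])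
  have v: "weighted_cov M w v v \<le> gruss_bound M w v z\<^sub>1 z\<^sub>2"
    by (rule weighted_cov_self_le_gruss_bound[OF w ivz\<^sub>1 ivz\<^sub>2 iz ivv bv])
  have u: "weighted_cov M w u u \<le> gruss_bound M w u g\<^sub>1 g\<^sub>2"
    by (rule weighted_cov_self_le_gruss_bound[OF w iug\<^sub>1 iug\<^sub>2 ig iuu bu])
  have "(weighted_cov M w v u)\<^sup>2 \<le> weighted_cov M w v v * weighted_cov M w u u"
    by (rule weighted_cov_square_le[OF w iw iv iu ivv iuu ivu])
  also have "\<dots> \<le> gruss_bound M w v z\<^sub>1 z\<^sub>2 * gruss_bound M w u g\<^sub>1 g\<^sub>2"
    using v weighted_cov_self_nonneg[OF w iw iv ivv] weighted_cov_self_nonneg[OF w iw iu iuu]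
    by (intro mult_mono[OF v u]) linarith+
  finally show ?thesis .
qed

lemma kat_kernel_change_of_variables:
  fixes x rho eta alpha tau :: real
  assumes x: "0 < x" and rho: "0 < rho" and tau: "0 < tau" "tau < x"
  shows "((tau/x) powr rho) powr eta * (1 - (tau/x) powr rho) powr (alpha - 1) * (rho / x * (tau/x) powr (rho - 1))
     = rho * x powr (-(rho * (eta + alpha))) * kat_kernel rho alpha eta x tau"
proof -
  define r where "r = tau / x"
  have r: "0 < r" "r < 1" using tau x by (auto simp: r_def field_simps)
  have tau_eq: "tau = x * r" using x by (simp add: r_def)
  have r_rho: "r powr rho < 1" using powr_less_mono2[of rho r 1] r rho by simp
  have diff: "x powr rho - tau powr rho = x powr rho * (1 - r powr rho)"
    using x r by (simp add: tau_eq powr_mult algebra_simps)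
  have "inverse ((x powr rho * (1 - r powr rho)) powr (1 - alpha))
      = (x powr rho * (1 - r powr rho)) powr (alpha - 1)"
    by (simp add: powr_minus[symmetric])
  also have "\<dots> = x powr (rho * (alpha - 1)) * (1 - r powr rho) powr (alpha - 1)"
    using r_rho by (simp add: powr_mult powr_powr)
  finally have kernel: "kat_kernel rho alpha eta x tau = x powr (rho * (eta + 1) - 1) * r powr (rho * (eta + 1) - 1)
      * (x powr (rho * (alpha - 1)) * (1 - r powr rho) powr (alpha - 1))"
    unfolding kat_kernel_def diff using x r by (simp add: tau_eq powr_mult divide_inverse)
  have r_pow: "r powr (rho * (eta + 1) - 1) = (r powr rho) powr eta * r powr (rho - 1)"
    using r by (simp add: powr_powr flip: powr_add) (simp add: algebra_simps)
  have x_pow: "x powr (-(rho * (eta + alpha))) * (x powr (rho * (eta + 1) - 1) * x powr (rho * (alpha - 1))) = 1 / x"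
    using x by (simp add: powr_minus_divide flip: powr_add) (simp add: algebra_simps powr_diff)
  have "rho * x powr (-(rho * (eta + alpha))) * kat_kernel rho alpha eta x tau
     = rho * (x powr (-(rho * (eta + alpha))) * (x powr (rho * (eta + 1) - 1) * x powr (rho * (alpha - 1))))
       * ((r powr rho) powr eta * r powr (rho - 1)) * (1 - r powr rho) powr (alpha - 1)"
    unfolding kernel r_pow by (simp add: mult_ac)
  also have "\<dots> = ((tau/x) powr rho) powr eta * (1 - (tau/x) powr rho) powr (alpha - 1) * (rho / x * (tau/x) powr (rho - 1))"
    unfolding x_pow r_def by simp
  finally show ?thesis by simp
qed

lemma scaled_powr_ereal_limits:
  fixes x rho :: real
  assumes x: "0 < x" and rho: "0 < rho"
  shows "((ereal \<circ> (\<lambda>tau. (tau/x) powr rho) \<circ> real_of_ereal) \<longlongrightarrow> ereal 0) (at_right (ereal 0))"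
    and "((ereal \<circ> (\<lambda>tau. (tau/x) powr rho) \<circ> real_of_ereal) \<longlongrightarrow> ereal 1) (at_left (ereal x))"
proof -
  show "((ereal \<circ> (\<lambda>tau. (tau/x) powr rho) \<circ> real_of_ereal) \<longlongrightarrow> ereal 0) (at_right (ereal 0))"
    unfolding ereal_tendsto_simps
  proof (rule tendsto_zero_powrI[OF _ tendsto_const _ rho])
    show "((\<lambda>tau. tau / x) \<longlongrightarrow> 0) (at_right 0)"
      using x by (auto intro!: tendsto_eq_intros)
    show "\<forall>\<^sub>F tau in at_right 0. 0 \<le> tau / x"
      using x by (auto intro!: eventually_at_rightI[of 0 1])
  qed
  show "((ereal \<circ> (\<lambda>tau. (tau/x) powr rho) \<circ> real_of_ereal) \<longlongrightarrow> ereal 1) (at_left (ereal x))"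
    unfolding ereal_tendsto_simps using x by (auto intro!: tendsto_eq_intros)
qed

lemma kat_kernel_integral_substitution:
  fixes x rho eta alpha :: real
  assumes x: "0 < x" and rho: "0 < rho"
    and kernel: "set_integrable lborel {0..x} (kat_kernel rho alpha eta x)"
  shows "set_integrable lborel {0<..<1} (\<lambda>s. s powr eta * (1 - s) powr (alpha - 1))"
    and "(LBINT s=0..1. s powr eta * (1 - s) powr (alpha - 1))
         = rho * x powr (-(rho * (eta + alpha))) * (LINT tau:{0..x}|lborel. kat_kernel rho alpha eta x tau)"
proof -
  define f where "f = (\<lambda>s::real. s powr eta * (1 - s) powr (alpha - 1))"
  define g where "g = (\<lambda>tau::real. (tau/x) powr rho)"
  define g' where "g' = (\<lambda>tau::real. rho / x * (tau/x) powr (rho - 1))"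
  define C where "C = rho * x powr (-(rho * (eta + alpha)))"
  have fg: "f (g tau) * g' tau = C * kat_kernel rho alpha eta x tau" if "0 < tau" "tau < x" for tau
    using kat_kernel_change_of_variables[OF x rho that] by (simp add: f_def g_def g'_def C_def)
  have g_range: "0 < g tau \<and> g tau < 1" if "0 < tau" "tau < x" for tau
    using that x rho powr_less_mono2[of rho "tau/x" 1] by (simp add: g_def)
  have "set_integrable lborel {0<..<x} (\<lambda>tau. C * kat_kernel rho alpha eta x tau)"
    by (intro set_integrable_mult_right set_integrable_subset[OF kernel]) auto
  then have fg_integrable: "set_integrable lborel (einterval (ereal 0) (ereal x)) (\<lambda>tau. f (g tau) * g' tau)"
    by (rule set_integrable_cong[THEN iffD1, rotated -1]) (auto simp: fg)
  have g_deriv: "DERIV g t :> g' t" if "ereal 0 < ereal t" "ereal t < ereal x" for t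
    using that x unfolding g_def g'_def
    by (auto intro!: derivative_eq_intros simp: field_simps powr_diff)
  have f_cont: "isCont f (g t)" if "ereal 0 < ereal t" "ereal t < ereal x" for t
    using g_range[of t] that unfolding f_def by (auto intro!: continuous_intros)
  have g'_cont: "isCont g' t" if "ereal 0 < ereal t" "ereal t < ereal x" for t
    using that x unfolding g'_def by (auto intro!: continuous_intros)
  have f_nonneg: "0 \<le> f (g t)" for t
    unfolding f_def by simp
  have g'_nonneg: "0 \<le> g' t" if "ereal 0 \<le> ereal t" "ereal t \<le> ereal x" for t
    using that x rho unfolding g'_def by auto
  note g_limits = scaled_powr_ereal_limits[OF x rho, folded g_def]
  note subst = interval_integral_substitution_nonneg[where f = f and g = g and g' = g',
      OF _ g_deriv f_cont g'_cont f_nonneg g'_nonneg g_limits fg_integrable]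
  show "set_integrable lborel {0<..<1} (\<lambda>s. s powr eta * (1 - s) powr (alpha - 1))"
    using subst(1) x by (simp add: f_def)
  have "(LBINT s=0..1. s powr eta * (1 - s) powr (alpha - 1)) = (LBINT t=ereal 0..ereal x. f (g t) * g' t)"
    using subst(2) x by (simp add: f_def zero_ereal_def one_ereal_def)
  also have "\<dots> = (LBINT t=ereal 0..ereal x. C * kat_kernel rho alpha eta x t)"
    using x by (intro interval_integral_cong) (auto simp: fg min_def max_def)
  also have "\<dots> = (LBINT t:{0..x}. C * kat_kernel rho alpha eta x t)"
    using x by (intro interval_integral_Icc) simp
  also have "\<dots> = C * (LINT tau:{0..x}|lborel. kat_kernel rho alpha eta x tau)"
    by (rule set_integral_mult_right)
  finally show "(LBINT s=0..1. s powr eta * (1 - s) powr (alpha - 1))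
      = rho * x powr (-(rho * (eta + alpha))) * (LINT tau:{0..x}|lborel. kat_kernel rho alpha eta x tau)"
    by (simp add: C_def)
qed

lemma not_set_integrable_inverse_at_0: "\<not> set_integrable lborel {0<..1/2::real} (\<lambda>s. 1 / s)"
proof
  assume "set_integrable lborel {0<..1/2::real} (\<lambda>s. 1 / s)"
  then have integrable: "(\<lambda>s::real. 1 / s) integrable_on {0<..1/2}"
    by (rule set_borel_integral_eq_integral(1))
  define I where "I = integral {0<..1/2::real} (\<lambda>s. 1 / s)"
  define e where "e = min (1/4) (exp (-(\<bar>I\<bar> + 1)))"
  have e: "0 < e" "e < 1/2" by (auto simp: e_def)
  have "ln e \<le> ln (exp (-(\<bar>I\<bar> + 1)))"
    using e by (subst ln_le_cancel_iff) (auto simp: e_def)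
  then have "ln e \<le> -(\<bar>I\<bar> + 1)" by simp
  have ftc: "((\<lambda>s::real. 1 / s) has_integral (ln (1/2) - ln e)) {e..1/2}"
  proof (rule fundamental_theorem_of_calculus)
    show "(ln has_vector_derivative 1 / t) (at t within {e..1/2})" if "t \<in> {e..1/2}" for t
      using that e by (auto intro!: derivative_eq_intros simp flip: has_real_derivative_iff_has_vector_derivative)
  qed (use e in simp)
  have "integral {e..1/2} (\<lambda>s::real. 1 / s) \<le> I"
    unfolding I_def using e has_integral_integrable[OF ftc] integrable
    by (intro integral_subset_le) auto
  then have "ln (1/2) - ln e \<le> I"
    using ftc by (simp add: integral_unique)
  moreover have "ln (1/2::real) > -1"
    using ln_2_less_1 by (simp add: ln_div)
  ultimately show False
    using \<open>ln e \<le> -(\<bar>I\<bar> + 1)\<close> by linarith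
qed

lemma inverse_le_beta_integrand:
  fixes eta alpha s :: real
  assumes eta: "eta \<le> -1" and s: "0 < s" "s \<le> 1/2"
  shows "min 1 ((1/2) powr (alpha - 1)) / s \<le> s powr eta * (1 - s) powr (alpha - 1)"
proof -
  have "min 1 ((1/2) powr (alpha - 1)) \<le> (1 - s) powr (alpha - 1)"
  proof (cases "alpha \<ge> 1")
    case True
    then have "(1/2::real) powr (alpha - 1) \<le> (1 - s) powr (alpha - 1)"
      using s by (intro powr_mono2) auto
    then show ?thesis by linarith
  next
    case False
    then have "(1::real) powr (alpha - 1) \<le> (1 - s) powr (alpha - 1)"
      using s by (intro powr_mono2') auto
    then show ?thesis by simp
  qed
  moreover have "s powr (-1) \<le> s powr eta"
    using eta s by (intro powr_mono') auto
  then have "1 / s \<le> s powr eta"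
    using s by (simp add: powr_neg_one)
  ultimately have "1 / s * min 1 ((1/2) powr (alpha - 1)) \<le> s powr eta * (1 - s) powr (alpha - 1)"
    using s by (intro mult_mono) auto
  then show ?thesis by simp
qed

lemma beta_integrand_integrable_imp_gt_minus_one:
  fixes eta alpha :: real
  assumes integrable: "set_integrable lborel {0<..<1} (\<lambda>s. s powr eta * (1 - s) powr (alpha - 1))"
  shows "eta > -1"
proof (rule ccontr)
  assume "\<not> eta > -1"
  then have eta: "eta \<le> -1" by simp
  define m where "m = min 1 ((1/2::real) powr (alpha - 1))"
  have m: "m > 0" by (simp add: m_def)
  have bound: "1 / s \<le> (1/m) * (s powr eta * (1 - s) powr (alpha - 1))" if "0 < s" "s \<le> 1/2" for s
    using inverse_le_beta_integrand[OF eta that, of alpha] m that by (simp add: m_def field_simps)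
  have "set_integrable lborel {0<..1/2} (\<lambda>s. (1/m) * (s powr eta * (1 - s) powr (alpha - 1)))"
    by (intro set_integrable_mult_right set_integrable_subset[OF integrable]) auto
  then have "set_integrable lborel {0<..1/2::real} (\<lambda>s. 1 / s)"
    unfolding set_integrable_def
  proof (rule Bochner_Integration.integrable_bound)
    show "(\<lambda>s::real. indicat_real {0<..1/2} s *\<^sub>R (1 / s)) \<in> borel_measurable lborel"
      by measurable
    show "AE s in lborel. norm (indicat_real {0<..1/2} s *\<^sub>R (1 / s))
        \<le> norm (indicat_real {0<..1/2} s *\<^sub>R ((1/m) * (s powr eta * (1 - s) powr (alpha - 1))))"
      using bound m by (intro AE_I2) (auto simp: indicator_def)
  qed
  then show False
    using not_set_integrable_inverse_at_0 by blast
qed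

lemma kat_kernel_integral:
  fixes x rho eta alpha :: real
  assumes x: "0 < x" and rho: "0 < rho" and alpha: "0 < alpha"
    and kernel: "set_integrable lborel {0..x} (kat_kernel rho alpha eta x)"
  shows "(LINT tau:{0..x}|lborel. kat_kernel rho alpha eta x tau)
         = x powr (rho * (eta + alpha)) / rho * Beta (eta + 1) alpha"
proof -
  note subst = kat_kernel_integral_substitution[OF x rho kernel]
  have eta: "eta > -1"
    by (rule beta_integrand_integrable_imp_gt_minus_one[OF subst(1)])
  have "(LBINT s=0..1. s powr eta * (1 - s) powr (alpha - 1))
      = (LBINT s=ereal 0..ereal 1. s powr (eta + 1 - 1) * (1 - s) powr (alpha - 1))"
    by (simp add: zero_ereal_def one_ereal_def)
  also have "\<dots> = (LBINT s:{0..1}. s powr (eta + 1 - 1) * (1 - s) powr (alpha - 1))"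
    by (rule interval_integral_Icc) simp
  also have "\<dots> = integral {0..1} (\<lambda>s. s powr (eta + 1 - 1) * (1 - s) powr (alpha - 1))"
    using integrable_Beta[of "eta + 1" alpha] eta alpha
    by (intro set_borel_integral_eq_integral(2)) simp
  also have "\<dots> = Beta (eta + 1) alpha"
    using has_integral_Beta_real[of "eta + 1" alpha] eta alpha by (simp add: integral_unique)
  finally have "Beta (eta + 1) alpha
      = rho * x powr (-(rho * (eta + alpha))) * (LINT tau:{0..x}|lborel. kat_kernel rho alpha eta x tau)"
    using subst(2) by simp
  moreover have "x powr (rho * (eta + alpha)) * x powr (-(rho * (eta + alpha))) = 1"
    using x by (simp flip: powr_add)
  ultimately show ?thesis
    using rho by (simp add: field_simps)
qed

definition kat_weight :: "real \<Rightarrow> real \<Rightarrow> real \<Rightarrow> real \<Rightarrow> real \<Rightarrow> real" where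
  "kat_weight rho alpha eta x t = indicator {0..x} t * kat_kernel rho alpha eta x t"

lemma kat_weight_nonneg: "0 \<le> kat_weight rho alpha eta x t"
  by (simp add: kat_weight_def kat_kernel_def)

lemma kat_weight_support: "kat_weight rho alpha eta x t \<noteq> 0 \<Longrightarrow> 0 \<le> t"
  by (cases "t \<in> {0..x}") (auto simp: kat_weight_def)

lemma kat_exists_iff_integrable:
  "kat_exists rho alpha eta f x \<longleftrightarrow> integrable lborel (\<lambda>t. kat_weight rho alpha eta x t * f t)"
  by (simp add: kat_exists_def set_integrable_def kat_weight_def mult.assoc)

lemma kat_J_eq_integral:
  "kat_J rho alpha beta eta k f x
     = rho powr (1 - beta) * x powr k / Gamma alpha * (\<integral>t. kat_weight rho alpha eta x t * f t \<partial>lborel)"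
  by (simp add: kat_J_def set_lebesgue_integral_def kat_weight_def mult.assoc)

lemma kat_Lambda_eq_kat_J_one:
  assumes x: "0 < x" and rho: "0 < rho" and alpha: "0 < alpha"
    and kernel: "kat_exists rho alpha eta (\<lambda>t. 1) x"
  shows "kat_Lambda rho alpha beta eta k x = kat_J rho alpha beta eta k (\<lambda>t. 1) x"
proof -
  have "(LINT tau:{0..x}|lborel. kat_kernel rho alpha eta x tau)
      = x powr (rho * (eta + alpha)) / rho * Beta (eta + 1) alpha"
    using kernel by (intro kat_kernel_integral x rho alpha) (simp add: kat_exists_def)
  moreover have "rho powr (1 - beta) = rho * rho powr (- beta)"
    using rho by (simp add: powr_diff powr_minus field_simps)
  moreover have "x powr (k + rho * (eta + alpha)) = x powr k * x powr (rho * (eta + alpha))"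
    by (simp add: powr_add)
  moreover have "Gamma alpha > 0"
    using alpha by (rule Gamma_real_pos)
  ultimately show ?thesis
    using rho by (simp add: kat_Lambda_def kat_J_def Beta_def add_ac field_simps)
qed

lemma kat_weight_mult_square_measurable:
  assumes kernel: "kat_exists rho alpha eta (\<lambda>t. 1) x"
    and f: "set_integrable lborel {0..} f"
  shows "(\<lambda>t. kat_weight rho alpha eta x t * (f t * f t)) \<in> borel_measurable lborel"
proof -
  have "kat_weight rho alpha eta x \<in> borel_measurable lborel"
    using kernel by (simp add: kat_exists_iff_integrable borel_measurable_integrable)
  moreover have "(\<lambda>t. indicator {0..} t *\<^sub>R f t) \<in> borel_measurable lborel"
    using f unfolding set_integrable_def by (rule borel_measurable_integrable)
  ultimately have "(\<lambda>t. kat_weight rho alpha eta x t * ((indicator {0..} t *\<^sub>R f t) * (indicator {0..} t *\<^sub>R f t)))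
      \<in> borel_measurable lborel"
    by measurable
  also have "(\<lambda>t. kat_weight rho alpha eta x t * ((indicator {0..} t *\<^sub>R f t) * (indicator {0..} t *\<^sub>R f t)))
      = (\<lambda>t. kat_weight rho alpha eta x t * (f t * f t))"
    using kat_weight_support by (fastforce simp: indicator_def)
  finally show ?thesis .
qed

theorem theorem2:
  fixes v u z1 z2 g1 g2 :: "real \<Rightarrow> real"
    and x alpha rho beta eta k :: real
  assumes int_v: "set_integrable lborel {0..} v"
    and int_u: "set_integrable lborel {0..} u"
    and int_z1: "set_integrable lborel {0..} z1"
    and int_z2: "set_integrable lborel {0..} z2"
    and int_g1: "set_integrable lborel {0..} g1"
    and int_g2: "set_integrable lborel {0..} g2"
    and bv: "\<And>t. t \<ge> 0 \<Longrightarrow> z1 t \<le> v t \<and> v t \<le> z2 t"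
    and bu: "\<And>t. t \<ge> 0 \<Longrightarrow> g1 t \<le> u t \<and> u t \<le> g2 t"
    and x: "x > 0" and alpha: "alpha > 0" and rho: "rho > 0"
    and ex_1: "kat_exists rho alpha eta (\<lambda>t. 1) x"
    and ex_v: "kat_exists rho alpha eta v x"
    and ex_u: "kat_exists rho alpha eta u x"
    and ex_vu: "kat_exists rho alpha eta (\<lambda>t. v t * u t) x"
    and ex_z1: "kat_exists rho alpha eta z1 x"
    and ex_z2: "kat_exists rho alpha eta z2 x"
    and ex_vz1: "kat_exists rho alpha eta (\<lambda>t. v t * z1 t) x"
    and ex_vz2: "kat_exists rho alpha eta (\<lambda>t. v t * z2 t) x"
    and ex_z1z2: "kat_exists rho alpha eta (\<lambda>t. z1 t * z2 t) x"
    and ex_g1: "kat_exists rho alpha eta g1 x"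
    and ex_g2: "kat_exists rho alpha eta g2 x"
    and ex_ug1: "kat_exists rho alpha eta (\<lambda>t. u t * g1 t) x"
    and ex_ug2: "kat_exists rho alpha eta (\<lambda>t. u t * g2 t) x"
    and ex_g1g2: "kat_exists rho alpha eta (\<lambda>t. g1 t * g2 t) x"
  shows "(kat_Lambda rho alpha beta eta k x * kat_J rho alpha beta eta k (\<lambda>t. v t * u t) x
          - kat_J rho alpha beta eta k v x * kat_J rho alpha beta eta k u x)\<^sup>2
         \<le> kat_T rho alpha beta eta k x v z1 z2 * kat_T rho alpha beta eta k x u g1 g2"
proof -
  define w where "w = kat_weight rho alpha eta x"
  define c where "c = rho powr (1 - beta) * x powr k / Gamma alpha"
  have J: "kat_J rho alpha beta eta k f x = c * (\<integral>t. w t * f t \<partial>lborel)" for f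
    by (simp add: kat_J_eq_integral w_def c_def)
  have L: "kat_Lambda rho alpha beta eta k x = c * (\<integral>t. w t \<partial>lborel)"
    using kat_Lambda_eq_kat_J_one[OF x rho alpha ex_1] by (simp add: J)
  have T: "kat_T rho alpha beta eta k x \<phi> \<psi> \<omega> = c\<^sup>2 * gruss_bound lborel w \<phi> \<psi> \<omega>" for \<phi> \<psi> \<omega>
    by (simp add: kat_T_def J L gruss_bound_def algebra_simps power2_eq_square)
  note integrable = kat_exists_iff_integrable[of rho alpha eta _ x, folded w_def]
  have "(weighted_cov lborel w v u)\<^sup>2 \<le> gruss_bound lborel w v z1 z2 * gruss_bound lborel w u g1 g2"
    using ex_1 ex_v ex_u ex_vu ex_vz1 ex_vz2 ex_z1z2 ex_ug1 ex_ug2 ex_g1g2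
      kat_weight_mult_square_measurable[OF ex_1 int_v] kat_weight_mult_square_measurable[OF ex_1 int_u]
      bv[OF kat_weight_support] bu[OF kat_weight_support]
    by (intro weighted_gruss_inequality) (simp_all add: integrable w_def kat_weight_nonneg)
  then have "(c\<^sup>2)\<^sup>2 * (weighted_cov lborel w v u)\<^sup>2
      \<le> (c\<^sup>2)\<^sup>2 * (gruss_bound lborel w v z1 z2 * gruss_bound lborel w u g1 g2)"
    by (rule mult_left_mono) simp
  moreover have "kat_Lambda rho alpha beta eta k x * kat_J rho alpha beta eta k (\<lambda>t. v t * u t) x
      - kat_J rho alpha beta eta k v x * kat_J rho alpha beta eta k u x = c\<^sup>2 * weighted_cov lborel w v u"
    by (simp add: J L weighted_cov_def algebra_simps power2_eq_square)
  ultimately show ?thesis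
    by (simp add: T power_mult_distrib mult_ac)
qed

end
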